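(* For every $n \geq 2$, the set $\{Der_n\}$ of deranged linear arrangements of $\{1,\ldots,n\}$ is equidistributed.
   Context: A linear arrangement of $\{1,\ldots,n\}$ is a sequence $a_1\cdots a_n$ in which each of $1,\ldots,n$ appears exactly once; it is deranged if $a_t \neq t$ for all $t$. For a set $X$ of linear arrangements of $\{1,\ldots,n\}$ and $i\in\{1,\ldots,n\}$, the class $X^{(i)}$ is the set of arrangements in $X$ whose first entry is $i$. $X$ is called equidistributed if it is partitioned into its nonempty classes and all nonempty classes $X^{(i)}$ have the same cardinality. *)

theory Defs
  imports Main
begin

text \<open>A linear arrangement a_1 ... a_n of {1,...,n} is a list xs of length n
  containing each of 1..n exactly once; a_t corresponds to xs ! (t - 1).\<close>

definition linear_arrangements :: "nat \<Rightarrow> nat list set" where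
  "linear_arrangements n = {xs. length xs = n \<and> distinct xs \<and> set xs = {1..n}}"

definition deranged :: "nat list \<Rightarrow> bool" where
  "deranged xs \<longleftrightarrow> (\<forall>t<length xs. xs ! t \<noteq> t + 1)"

definition Der :: "nat \<Rightarrow> nat list set" where
  "Der n = {xs \<in> linear_arrangements n. deranged xs}"

definition arr_class :: "nat list set \<Rightarrow> nat \<Rightarrow> nat list set" where
  "arr_class X i = {xs \<in> X. xs \<noteq> [] \<and> hd xs = i}"

definition equidistributed :: "nat \<Rightarrow> nat list set \<Rightarrow> bool" where
  "equidistributed n X \<longleftrightarrow>
     X \<subseteq> linear_arrangements n \<and>
     X = \<Union>{arr_class X i | i. i \<in> {1..n} \<and> arr_class X i \<noteq> {}} \<and>
     (\<forall>i\<in>{1..n}. \<forall>j\<in>{1..n}. arr_class X i \<noteq> {} \<longrightarrow> arr_class X j \<noteq> {} \<longrightarrow>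
        card (arr_class X i) = card (arr_class X j))"

end

theory Submission
  imports Defs "HOL-Combinatorics.Permutations"
begin

text \<open>For 1 < i, j the transposition (i j) fixes 1, so conjugating an arrangement by it keeps
  the first position in place and relabels a first entry i as j. Conjugation preserves derangements
  and is an involution, hence a bijection between the classes of i and j. No derangement starts
  with 1, so all nonempty classes have the same size.\<close>

text \<open>The conjugate of the arrangement t \<mapsto> a_t by the transposition (i j); list positions are
  0-based, so on positions the transposition reads (i-1 j-1).\<close>

definition transpose_arrangement :: "nat \<Rightarrow> nat \<Rightarrow> nat list \<Rightarrow> nat list" where
  "transpose_arrangement i j xs =
     map (Transposition.transpose i j) (permute_list (Transposition.transpose (i - 1) (j - 1)) xs)"

lemma transpose_Suc_Suc:
  "Transposition.transpose (Suc a) (Suc b) (Suc t) = Suc (Transposition.transpose a b t)"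
  by (simp add: transpose_def)

lemma length_transpose_arrangement [simp]:
  "length (transpose_arrangement i j xs) = length xs"
  by (simp add: transpose_arrangement_def)

lemma transpose_permutes_positions:
  assumes "i \<in> {1..length xs}" "j \<in> {1..length xs}"
  shows "Transposition.transpose (i - 1) (j - 1) permutes {..<length xs}"
  using assms by (intro permutes_swap_id) auto

lemma nth_transpose_arrangement:
  assumes "i \<in> {1..length xs}" "j \<in> {1..length xs}" "t < length xs"
  shows "transpose_arrangement i j xs ! t =
           Transposition.transpose i j (xs ! Transposition.transpose (i - 1) (j - 1) t)"
  using assms transpose_permutes_positions[OF assms(1,2)]
  by (simp add: transpose_arrangement_def permute_list_nth)

lemma transpose_arrangement_commute:
  "transpose_arrangement j i = transpose_arrangement i j"
  by (rule ext) (simp add: transpose_arrangement_def transpose_commute)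

lemma transpose_arrangement_involutory:
  assumes "i \<in> {1..length xs}" "j \<in> {1..length xs}"
  shows "transpose_arrangement i j (transpose_arrangement i j xs) = xs"
proof -
  let ?\<pi> = "Transposition.transpose (i - 1) (j - 1)"
  have \<pi>: "?\<pi> permutes {..<length xs}"
    using transpose_permutes_positions[OF assms] .
  have "transpose_arrangement i j (transpose_arrangement i j xs)
        = permute_list ?\<pi> (permute_list ?\<pi> xs)"
    using \<pi> by (simp add: transpose_arrangement_def permute_list_map)
  also have "\<dots> = permute_list (?\<pi> \<circ> ?\<pi>) xs"
    by (rule permute_list_compose[OF \<pi>, symmetric])
  finally show ?thesis
    by simp
qed

lemma transpose_arrangement_in_linear_arrangements:
  assumes "xs \<in> linear_arrangements n" "i \<in> {1..n}" "j \<in> {1..n}"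
  shows "transpose_arrangement i j xs \<in> linear_arrangements n"
proof -
  have len: "length xs = n" and dist: "distinct xs" and set: "set xs = {1..n}"
    using assms(1) by (auto simp: linear_arrangements_def)
  have \<pi>: "Transposition.transpose (i - 1) (j - 1) permutes {..<length xs}"
    using transpose_permutes_positions assms(2,3) len by blast
  show ?thesis
    using \<pi> len dist set assms(2,3)
    by (simp add: linear_arrangements_def transpose_arrangement_def distinct_map)
qed

lemma deranged_transpose_arrangement:
  assumes "deranged xs" "i \<in> {1..length xs}" "j \<in> {1..length xs}"
  shows "deranged (transpose_arrangement i j xs)"
  unfolding deranged_def
proof (intro allI impI)
  fix t
  assume "t < length (transpose_arrangement i j xs)"
  then have t: "t < length xs"
    by simp
  define s where "s = Transposition.transpose (i - 1) (j - 1) t"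
  have "s < length xs"
    using permutes_in_image[OF transpose_permutes_positions[OF assms(2,3)]] t
    by (simp add: s_def)
  then have "xs ! s \<noteq> s + 1"
    using assms(1) by (simp add: deranged_def)
  moreover have "Transposition.transpose i j (t + 1) = s + 1"
    using assms(2,3) transpose_Suc_Suc[of "i - 1" "j - 1" t] by (simp add: s_def)
  moreover have "transpose_arrangement i j xs ! t = Transposition.transpose i j (xs ! s)"
    using nth_transpose_arrangement[OF assms(2,3) t] by (simp add: s_def)
  ultimately show "transpose_arrangement i j xs ! t \<noteq> t + 1"
    by (metis transpose_involutory)
qed

lemma hd_transpose_arrangement:
  assumes "xs \<noteq> []" "i \<in> {2..length xs}" "j \<in> {2..length xs}"
  shows "hd (transpose_arrangement i j xs) = Transposition.transpose i j (hd xs)"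
proof -
  have "Transposition.transpose (i - 1) (j - 1) 0 = 0"
    using assms(2,3) by simp
  moreover have "transpose_arrangement i j xs \<noteq> []"
    using assms(1) by (simp flip: length_greater_0_conv)
  ultimately show ?thesis
    using assms nth_transpose_arrangement[of i xs j 0]
    by (simp add: hd_conv_nth)
qed

lemma transpose_arrangement_arr_class_Der:
  assumes "xs \<in> arr_class (Der n) i" "i \<in> {2..n}" "j \<in> {2..n}"
  shows "transpose_arrangement i j xs \<in> arr_class (Der n) j"
proof -
  have xs: "xs \<in> linear_arrangements n" "deranged xs" "xs \<noteq> []" "hd xs = i"
    using assms(1) by (auto simp: arr_class_def Der_def)
  then have len: "length xs = n"
    by (simp add: linear_arrangements_def)
  have "transpose_arrangement i j xs \<in> linear_arrangements n"
    using transpose_arrangement_in_linear_arrangements[OF xs(1)] assms(2,3) by simp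
  moreover have "deranged (transpose_arrangement i j xs)"
    using deranged_transpose_arrangement[OF xs(2)] len assms(2,3) by simp
  moreover have "transpose_arrangement i j xs \<noteq> []"
    using xs(3) by (simp flip: length_greater_0_conv)
  moreover have "hd (transpose_arrangement i j xs) = j"
    using hd_transpose_arrangement[OF xs(3)] xs(4) len assms(2,3) by simp
  ultimately show ?thesis
    by (simp add: arr_class_def Der_def)
qed

lemma bij_betw_arr_class_Der:
  assumes "i \<in> {2..n}" "j \<in> {2..n}"
  shows "bij_betw (transpose_arrangement i j) (arr_class (Der n) i) (arr_class (Der n) j)"
proof (rule bij_betw_byWitness[where f' = "transpose_arrangement i j"])
  have "transpose_arrangement i j (transpose_arrangement i j xs) = xs"
    if "xs \<in> linear_arrangements n" for xs
    using that assms by (intro transpose_arrangement_involutory) (auto simp: linear_arrangements_def)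
  then show "\<forall>xs \<in> arr_class (Der n) i. transpose_arrangement i j (transpose_arrangement i j xs) = xs"
    and "\<forall>xs \<in> arr_class (Der n) j. transpose_arrangement i j (transpose_arrangement i j xs) = xs"
    by (auto simp: arr_class_def Der_def)
  show "transpose_arrangement i j ` arr_class (Der n) i \<subseteq> arr_class (Der n) j"
    using transpose_arrangement_arr_class_Der assms by blast
  show "transpose_arrangement i j ` arr_class (Der n) j \<subseteq> arr_class (Der n) i"
    using transpose_arrangement_arr_class_Der[of _ n j i] assms
    by (auto simp: transpose_arrangement_commute)
qed

lemma arr_class_Der_1: "arr_class (Der n) 1 = {}"
proof -
  have "hd xs \<noteq> 1" if "deranged xs" "xs \<noteq> []" for xs
  proof -
    have "xs ! 0 \<noteq> 0 + 1"
      using that unfolding deranged_def by blast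
    then show ?thesis
      using that(2) by (simp add: hd_conv_nth)
  qed
  then show ?thesis
    by (auto simp: arr_class_def Der_def)
qed

lemma Union_arr_class:
  assumes "X \<subseteq> linear_arrangements n" "n \<ge> 1"
  shows "X = \<Union>{arr_class X i | i. i \<in> {1..n} \<and> arr_class X i \<noteq> {}}"
proof
  show "X \<subseteq> \<Union>{arr_class X i | i. i \<in> {1..n} \<and> arr_class X i \<noteq> {}}"
  proof
    fix xs
    assume xs: "xs \<in> X"
    then have "length xs = n" "set xs = {1..n}"
      using assms(1) by (auto simp: linear_arrangements_def)
    then have ne: "xs \<noteq> []"
      using assms(2) by auto
    then have "hd xs \<in> {1..n}"
      using hd_in_set \<open>set xs = {1..n}\<close> by blast
    moreover have "xs \<in> arr_class X (hd xs)"
      using xs ne by (simp add: arr_class_def)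
    ultimately show "xs \<in> \<Union>{arr_class X i | i. i \<in> {1..n} \<and> arr_class X i \<noteq> {}}"
      by blast
  qed
qed (unfold arr_class_def, blast)

theorem proposition4p5:
  fixes n :: nat
  assumes "n \<ge> 2"
  shows "equidistributed n (Der n)"
proof -
  have "card (arr_class (Der n) i) = card (arr_class (Der n) j)"
    if "i \<in> {1..n}" "j \<in> {1..n}" "arr_class (Der n) i \<noteq> {}" "arr_class (Der n) j \<noteq> {}" for i j
  proof -
    have "i \<noteq> 1" "j \<noteq> 1"
      using that(3,4) arr_class_Der_1 by auto
    then have "i \<in> {2..n}" "j \<in> {2..n}"
      using that(1,2) by auto
    then show ?thesis
      by (rule bij_betw_same_card[OF bij_betw_arr_class_Der])
  qed
  moreover have sub: "Der n \<subseteq> linear_arrangements n"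
    by (auto simp: Der_def)
  moreover have "Der n = \<Union>{arr_class (Der n) i | i. i \<in> {1..n} \<and> arr_class (Der n) i \<noteq> {}}"
    using assms by (intro Union_arr_class[OF sub]) simp
  ultimately show ?thesis
    unfolding equidistributed_def by blast
qed

end
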